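(* Let $\alpha,\beta,\gamma\in\mathbb{Z}_2^n$ and $a,b\in\mathbb{Z}_2$, and let $\omega=\omega(\alpha,\beta,\gamma)$. Then $\mathrm{padp}_{a,b}(\alpha,\beta,\gamma)=0$ if and only if $\omega$ satisfies at least one pattern in the list $Q_{a,b}$, where: $Q_{0,0}$: [.*d0*], [6$\hat6$*7.*], [7$\hat7$*6.*], [7$\hat7$*0$\gamma_0$*]; $Q_{0,1}$: [.*d0*], [4$\hat4$*5.*], [4$\hat4$*0$\beta_0$*], [5$\hat5$*], [5$\hat5$*4.*], [5$\hat5$*1$\beta_0$*], [5$\hat5$*2$\gamma_0$*], [$\beta_0$*]; $Q_{1,0}$: [.*d0*], [2$\hat2$*3.*], [2$\hat2$*0$\alpha_0$*], [3$\hat3$*], [3$\hat3$*2.*], [3$\hat3$*1$\alpha_0$*], [3$\hat3$*4$\gamma_0$*], [$\alpha_0$*]; $Q_{1,1}$: [.*d0*], [0$\hat0$*], [0$\hat0$*1.*], [0$\hat0$*2$\alpha_0$*], [0$\hat0$*4$\beta_0$*], [1$\hat1$*0.*], [1$\hat1$*3$\alpha_0$*], [1$\hat1$*5$\beta_0$*], [1$\hat1$*6$\gamma_0$*], [$\alpha_0$*], [$\beta_0$*].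
   Context: For $\alpha,\beta,\gamma\in\mathbb{Z}_2^n$ (with $x=(x_0,\dots,x_{n-1})$, $x_0$ most significant) the octal word $\omega(\alpha,\beta,\gamma)\in\{0,\dots,7\}^n$ has symbols $\omega_i=4\alpha_i+2\beta_i+\gamma_i$; indices $0,\dots,7$ are identified with $\mathbb{Z}_2^3$ via $(p_0,p_1,p_2)\leftrightarrow4p_0+2p_1+p_2$, so $\oplus$ applies to them. $e_0,\dots,e_7$ are the standard basis row vectors of $\mathbb{Q}^8$. $A_0$ is $\frac14$ times the $8\times8$ matrix with rows $(4,0,0,1,0,1,1,0)$, $(0,0,0,1,0,1,0,0)$, $(0,0,0,1,0,0,1,0)$, $(0,0,0,1,0,0,0,0)$, $(0,0,0,0,0,1,1,0)$, $(0,0,0,0,0,1,0,0)$, $(0,0,0,0,0,0,1,0)$, $(0,\dots,0)$, and $(A_k)_{i,j}=(A_0)_{i\oplus k,j\oplus k}$. With $L_{0,0}=(1,1,0,0,0,0,0,0)$, $L_{0,1}=(0,0,1,1,0,0,0,0)$, $L_{1,0}=(0,0,0,0,1,1,0,0)$, $L_{1,1}=(0,0,0,0,0,0,1,1)$, $\mathrm{padp}_{a,b}(\alpha,\beta,\gamma)=L_{a,b}A_{\omega_0}\cdots A_{\omega_{n-1}}e_0^T$. Patterns: a pattern is written between [ (most significant end) and ] (least significant end), and a word satisfies it if the whole word $\omega_0\cdots\omega_{n-1}$ matches it as a regular expression, where each pattern symbol matches one octal symbol: a digit $t$ matches exactly $t$; '.' matches any symbol; d matches $1,2,4,7$; e matches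 $0,3,5,6$; $\hat t$ matches $t,t\oplus3,t\oplus5$; $\alpha_0$ matches $0,1,2,3$; $\beta_0$ matches $0,1,4,5$; $\gamma_0$ matches $0,2,4,6$; s* matches zero or more consecutive symbols each matched by s. *)

theory Defs
  imports Complex_Main
begin

text \<open>Bit vectors in Z_2^n are lists of booleans (index 0 = most significant).
  The octal word has symbols 4 alpha_i + 2 beta_i + gamma_i.\<close>

definition omega :: "bool list \<Rightarrow> bool list \<Rightarrow> bool list \<Rightarrow> nat list" where
  "omega \<alpha> \<beta> \<gamma> =
     map (\<lambda>(x, y, z). 4 * of_bool x + 2 * of_bool y + of_bool z) (zip \<alpha> (zip \<beta> \<gamma>))"

type_synonym mat8 = "nat \<Rightarrow> nat \<Rightarrow> rat"
type_synonym vec8 = "nat \<Rightarrow> rat"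

definition matmul :: "mat8 \<Rightarrow> mat8 \<Rightarrow> mat8" where
  "matmul M N = (\<lambda>i j. \<Sum>k<8. M i k * N k j)"

definition idmat :: mat8 where
  "idmat = (\<lambda>i j. of_bool (i = j))"

definition A0_rows :: "rat list list" where
  "A0_rows = [[4,0,0,1,0,1,1,0],
              [0,0,0,1,0,1,0,0],
              [0,0,0,1,0,0,1,0],
              [0,0,0,1,0,0,0,0],
              [0,0,0,0,0,1,1,0],
              [0,0,0,0,0,1,0,0],
              [0,0,0,0,0,0,1,0],
              [0,0,0,0,0,0,0,0]]"

definition A0 :: mat8 where
  "A0 = (\<lambda>i j. (A0_rows ! i ! j) / 4)"

definition Amat :: "nat \<Rightarrow> mat8" where
  "Amat k = (\<lambda>i j. A0 (xor i k) (xor j k))"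

definition matprod :: "nat list \<Rightarrow> mat8" where
  "matprod w = foldr (\<lambda>k M. matmul (Amat k) M) w idmat"

definition Lvec :: "bool \<Rightarrow> bool \<Rightarrow> vec8" where
  "Lvec a b = (\<lambda>i. of_bool (i div 2 = 2 * of_bool a + of_bool b))"

definition e0 :: vec8 where
  "e0 = (\<lambda>j. of_bool (j = 0))"

definition padp :: "bool \<Rightarrow> bool \<Rightarrow> bool list \<Rightarrow> bool list \<Rightarrow> bool list \<Rightarrow> rat" where
  "padp a b \<alpha> \<beta> \<gamma> =
     (let P = matprod (omega \<alpha> \<beta> \<gamma>) in \<Sum>i<8. \<Sum>j<8. Lvec a b i * P i j * e0 j)"

datatype pitem = Sym "nat set" | Star "nat set"

fun pmatch :: "pitem list \<Rightarrow> nat list \<Rightarrow> bool" where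
  "pmatch [] w = (w = [])"
| "pmatch (Sym S # p) [] = False"
| "pmatch (Sym S # p) (x # w) = (x \<in> S \<and> pmatch p w)"
| "pmatch (Star S # p) [] = pmatch p []"
| "pmatch (Star S # p) (x # w) = (pmatch p (x # w) \<or> (x \<in> S \<and> pmatch (Star S # p) w))"

definition dotS :: "nat set" where "dotS = {0..7}"
definition dS :: "nat set" where "dS = {1,2,4,7}"
definition eS :: "nat set" where "eS = {0,3,5,6}"
definition hatS :: "nat \<Rightarrow> nat set" where "hatS t = {t, xor t 3, xor t 5}"
definition alpha0S :: "nat set" where "alpha0S = {0,1,2,3}"
definition beta0S :: "nat set" where "beta0S = {0,1,4,5}"
definition gamma0S :: "nat set" where "gamma0S = {0,2,4,6}"

abbreviation (input) D :: "nat \<Rightarrow> pitem" where "D t \<equiv> Sym {t}"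
abbreviation (input) H :: "nat \<Rightarrow> pitem" where "H t \<equiv> Star (hatS t)"

definition pat_d0 :: "pitem list" where
  "pat_d0 = [Star dotS, Sym dS, Star {0}]"

definition Q :: "bool \<Rightarrow> bool \<Rightarrow> pitem list list" where
  "Q a b = (case (a, b) of
     (False, False) \<Rightarrow>
       [pat_d0,
        [D 6, H 6, D 7, Star dotS],
        [D 7, H 7, D 6, Star dotS],
        [D 7, H 7, D 0, Star gamma0S]]
   | (False, True) \<Rightarrow>
       [pat_d0,
        [D 4, H 4, D 5, Star dotS],
        [D 4, H 4, D 0, Star beta0S],
        [D 5, H 5],
        [D 5, H 5, D 4, Star dotS],
        [D 5, H 5, D 1, Star beta0S],
        [D 5, H 5, D 2, Star gamma0S],
        [Star beta0S]]
   | (True, False) \<Rightarrow>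
       [pat_d0,
        [D 2, H 2, D 3, Star dotS],
        [D 2, H 2, D 0, Star alpha0S],
        [D 3, H 3],
        [D 3, H 3, D 2, Star dotS],
        [D 3, H 3, D 1, Star alpha0S],
        [D 3, H 3, D 4, Star gamma0S],
        [Star alpha0S]]
   | (True, True) \<Rightarrow>
       [pat_d0,
        [D 0, H 0],
        [D 0, H 0, D 1, Star dotS],
        [D 0, H 0, D 2, Star alpha0S],
        [D 0, H 0, D 4, Star beta0S],
        [D 1, H 1, D 0, Star dotS],
        [D 1, H 1, D 3, Star alpha0S],
        [D 1, H 1, D 5, Star beta0S],
        [D 1, H 1, D 6, Star gamma0S],
        [Star alpha0S],
        [Star beta0S]])"

end

theory Submission
  imports Defs "HOL-Library.Product_Lexorder"
begin

text \<open>All A_k and L_{a,b}, e_0 have nonnegative entries, so no cancellation occurs in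
  L_{a,b} A_{\<omega>_0} \<cdots> A_{\<omega>_{n-1}} e_0: whether it vanishes depends only on the support of the
  row vector L_{a,b} A_{\<omega>_0} \<cdots> A_{\<omega>_{n-1}}, which is computed letter by letter by a
  deterministic automaton on subsets of {0..7}. The patterns of Q_{a,b} are regular expressions,
  recognised by the deterministic automaton whose states are sets of positions in the patterns.
  A finite relation between the states of the two automata that contains the pair of initial
  states, is closed under all eight letters and relates only states that agree on acceptance
  shows that both automata accept the same words.\<close>

definition bisimulation ::
  "('a \<Rightarrow> 's \<Rightarrow> 's) \<Rightarrow> ('s \<Rightarrow> bool) \<Rightarrow> ('a \<Rightarrow> 't \<Rightarrow> 't) \<Rightarrow> ('t \<Rightarrow> bool) \<Rightarrow> 'a list \<Rightarrow> ('s \<times> 't) list \<Rightarrow> bool"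
where
  "bisimulation \<delta> F \<delta>' F' \<Sigma> R \<longleftrightarrow>
     list_all (\<lambda>(s, t). (F s \<longleftrightarrow> F' t) \<and> list_all (\<lambda>a. (\<delta> a s, \<delta>' a t) \<in> set R) \<Sigma>) R"

lemma bisimulation_fold:
  assumes "bisimulation \<delta> F \<delta>' F' \<Sigma> R" and "(s, t) \<in> set R" and "set w \<subseteq> set \<Sigma>"
  shows "F (fold \<delta> w s) \<longleftrightarrow> F' (fold \<delta>' w t)"
  using assms(2,3)
proof (induction w arbitrary: s t)
  case Nil
  then show ?case using assms(1) by (auto simp: bisimulation_def list_all_iff)
next
  case (Cons a w)
  then have "(\<delta> a s, \<delta>' a t) \<in> set R" using assms(1) by (auto simp: bisimulation_def list_all_iff)
  then show ?case using Cons by simp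
qed

definition vecmat :: "vec8 \<Rightarrow> mat8 \<Rightarrow> vec8" where
  "vecmat u M = (\<lambda>j. \<Sum>i<8. u i * M i j)"

definition supp :: "vec8 \<Rightarrow> nat list" where
  "supp u = filter (\<lambda>i. u i \<noteq> 0) [0..<8]"

definition supp_step :: "mat8 \<Rightarrow> nat list \<Rightarrow> nat list" where
  "supp_step M S = filter (\<lambda>j. \<exists>i\<in>set S. M i j \<noteq> 0) [0..<8]"

lemma sum_mult_foldr_matmul:
  "(\<Sum>i<8. u i * foldr (\<lambda>k M. matmul (A k) M) w idmat i 0) = fold (\<lambda>k v. vecmat v (A k)) w u 0"
proof (induction w arbitrary: u)
  case Nil
  show ?case by (simp add: idmat_def)
next
  case (Cons k w)
  let ?F = "foldr (\<lambda>k M. matmul (A k) M) w idmat"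
  have "(\<Sum>i<8. u i * matmul (A k) ?F i 0) = (\<Sum>i<8. \<Sum>l<8. u i * A k i l * ?F l 0)"
    by (simp add: matmul_def sum_distrib_left mult.assoc)
  also have "\<dots> = (\<Sum>l<8. \<Sum>i<8. u i * A k i l * ?F l 0)"
    by (rule sum.swap)
  also have "\<dots> = (\<Sum>l<8. vecmat u (A k) l * ?F l 0)"
    by (simp add: vecmat_def sum_distrib_right)
  finally show ?case by (simp add: Cons.IH)
qed

lemma vecmat_nonneg:
  assumes "\<forall>i<8. 0 \<le> u i" and "\<forall>i<8. \<forall>j<8. 0 \<le> M i j"
  shows "\<forall>j<8. 0 \<le> vecmat u M j"
  using assms by (auto simp: vecmat_def intro!: sum_nonneg)

lemma supp_vecmat:
  assumes "\<forall>i<8. 0 \<le> u i" and "\<forall>i<8. \<forall>j<8. 0 \<le> M i j"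
  shows "supp (vecmat u M) = supp_step M (supp u)"
  unfolding supp_def supp_step_def
proof (rule filter_cong[OF refl])
  fix j assume "j \<in> set [0..<8::nat]"
  then have "\<forall>i\<in>{..<8}. 0 \<le> u i * M i j" using assms by simp
  then have "vecmat u M j = 0 \<longleftrightarrow> (\<forall>i<8. u i * M i j = 0)"
    unfolding vecmat_def by (subst sum_nonneg_eq_0_iff) auto
  then show "vecmat u M j \<noteq> 0 \<longleftrightarrow> (\<exists>i\<in>set (filter (\<lambda>i. u i \<noteq> 0) [0..<8]). M i j \<noteq> 0)"
    by auto
qed

lemma fold_vecmat_eq_0_iff:
  assumes "\<forall>i<8. 0 \<le> u i" and "\<forall>k\<in>set w. \<forall>i<8. \<forall>j<8. 0 \<le> A k i j"
  shows "fold (\<lambda>k v. vecmat v (A k)) w u 0 = 0 \<longleftrightarrow> 0 \<notin> set (fold (\<lambda>k. supp_step (A k)) w (supp u))"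
  using assms
proof (induction w arbitrary: u)
  case Nil
  show ?case by (simp add: supp_def)
next
  case (Cons k w)
  then show ?case by (simp add: vecmat_nonneg supp_vecmat)
qed

fun offset_derivs :: "pitem list \<Rightarrow> nat \<Rightarrow> nat \<Rightarrow> nat list" where
  "offset_derivs [] i x = []"
| "offset_derivs (Sym S # p) i x = (if x \<in> S then [Suc i] else [])"
| "offset_derivs (Star S # p) i x = offset_derivs p (Suc i) x @ (if x \<in> S then [i] else [])"

lemma pmatch_Cons_iff_offset_derivs:
  "drop i p0 = p \<Longrightarrow> pmatch p (x # w) \<longleftrightarrow> (\<exists>j\<in>set (offset_derivs p i x). pmatch (drop j p0) w)"
proof (induction p i x rule: offset_derivs.induct)
  case (1 i x)
  then show ?case by simp
next
  case (2 S p i x)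
  then have "drop (Suc i) p0 = p" by (metis drop_Suc tl_drop list.sel(3))
  then show ?case by simp
next
  case (3 S p i x)
  then have "drop (Suc i) p0 = p" by (metis drop_Suc tl_drop list.sel(3))
  then show ?case using 3 by auto
qed

definition matches_at :: "pitem list list \<Rightarrow> (nat \<times> nat) list \<Rightarrow> nat list \<Rightarrow> bool" where
  "matches_at P T w \<longleftrightarrow> (\<exists>(q, i)\<in>set T. q < length P \<and> pmatch (drop i (P ! q)) w)"

text \<open>Sorting without duplicates makes equal sets of positions equal lists.\<close>
definition pos_step :: "pitem list list \<Rightarrow> nat \<Rightarrow> (nat \<times> nat) list \<Rightarrow> (nat \<times> nat) list" where
  "pos_step P x T = sort (remdups [(q, j). (q, i) \<leftarrow> T, j \<leftarrow> offset_derivs (drop i (P ! q)) i x])"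

lemma matches_at_Cons: "matches_at P T (x # w) \<longleftrightarrow> matches_at P (pos_step P x T) w"
  unfolding matches_at_def pos_step_def
  using pmatch_Cons_iff_offset_derivs[OF refl] by fastforce

lemma matches_at_fold: "matches_at P T w \<longleftrightarrow> matches_at P (fold (pos_step P) w T) []"
  by (induction w arbitrary: T) (simp_all add: matches_at_Cons)

definition start_positions :: "pitem list list \<Rightarrow> (nat \<times> nat) list" where
  "start_positions P = map (\<lambda>q. (q, 0)) [0..<length P]"

lemma matches_at_start_positions:
  "matches_at P (start_positions P) w \<longleftrightarrow> (\<exists>p\<in>set P. pmatch p w)"
proof -
  have "matches_at P (start_positions P) w \<longleftrightarrow> (\<exists>q<length P. pmatch (P ! q) w)"
    by (auto simp: matches_at_def start_positions_def)
  then show ?thesis by (metis in_set_conv_nth)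
qed

lemma xor_less_8: "i < 8 \<Longrightarrow> k < 8 \<Longrightarrow> xor i k < (8::nat)"
  using take_bit_nat_eq_self_iff[of 3 i] take_bit_nat_eq_self_iff[of 3 k]
    take_bit_nat_eq_self_iff[of 3 "xor i k"] take_bit_xor[of 3 i k] by simp

lemma A0_nonneg: "\<forall>i<8. \<forall>j<8. 0 \<le> A0 i j"
proof -
  have "list_all (\<lambda>i. list_all (\<lambda>j. 0 \<le> A0 i j) [0..<8]) [0..<8]"
    by code_simp
  then show ?thesis by (simp add: list_all_iff)
qed

lemma Amat_nonneg: "k < 8 \<Longrightarrow> \<forall>i<8. \<forall>j<8. 0 \<le> Amat k i j"
  by (simp add: Amat_def A0_nonneg xor_less_8)

lemma omega_less_8: "set (omega \<alpha> \<beta> \<gamma>) \<subseteq> set [0..<8]"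
  by (auto simp: omega_def set_zip)

lemma padp_eq_fold_vecmat:
  "padp a b \<alpha> \<beta> \<gamma> = fold (\<lambda>k v. vecmat v (Amat k)) (omega \<alpha> \<beta> \<gamma>) (Lvec a b) 0"
  by (simp add: padp_def matprod_def e0_def sum_mult_foldr_matmul)

definition padp_certificate :: "vec8 \<Rightarrow> pitem list list \<Rightarrow> (nat list \<times> (nat \<times> nat) list) list \<Rightarrow> bool"
where
  "padp_certificate u P R \<longleftrightarrow>
     bisimulation (\<lambda>k. supp_step (Amat k)) (\<lambda>S. 0 \<notin> set S) (pos_step P) (\<lambda>T. matches_at P T [])
       [0..<8] R
     \<and> (supp u, start_positions P) \<in> set R"

lemma padp_eq_0_iff_pmatch:
  assumes "padp_certificate (Lvec a b) P R"
  shows "padp a b \<alpha> \<beta> \<gamma> = 0 \<longleftrightarrow> (\<exists>p\<in>set P. pmatch p (omega \<alpha> \<beta> \<gamma>))"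
proof -
  let ?w = "omega \<alpha> \<beta> \<gamma>"
  have L: "\<forall>i<8. 0 \<le> Lvec a b i" by (simp add: Lvec_def)
  have "\<forall>k\<in>set ?w. k < 8"
    using omega_less_8[of \<alpha> \<beta> \<gamma>] by auto
  then have A: "\<forall>k\<in>set ?w. \<forall>i<8. \<forall>j<8. 0 \<le> Amat k i j"
    using Amat_nonneg by blast
  have "padp a b \<alpha> \<beta> \<gamma> = 0 \<longleftrightarrow> 0 \<notin> set (fold (\<lambda>k. supp_step (Amat k)) ?w (supp (Lvec a b)))"
    unfolding padp_eq_fold_vecmat using L A by (rule fold_vecmat_eq_0_iff)
  also have "\<dots> \<longleftrightarrow> matches_at P (fold (pos_step P) ?w (start_positions P)) []"
    using assms[unfolded padp_certificate_def]
    by (intro bisimulation_fold[OF conjunct1 conjunct2 omega_less_8])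
  also have "\<dots> \<longleftrightarrow> matches_at P (start_positions P) ?w"
    by (rule matches_at_fold[symmetric])
  finally show ?thesis by (simp only: matches_at_start_positions)
qed

text \<open>Each certificate is the set of states of the product automaton reachable from the pair of
  initial states; it was computed outside the logic and is only checked here.\<close>

definition cert_00 :: "(nat list \<times> (nat \<times> nat) list) list" where
  "cert_00 =
    [([], [(0,0),(0,2),(1,3)]),
     ([], [(0,0),(0,2),(2,3)]),
     ([], [(0,0),(1,3)]),
     ([], [(0,0),(2,3)]),
     ([0], [(0,0),(1,1)]),
     ([0,1], [(0,0),(1,0),(2,0),(3,0)]),
     ([0,3], [(0,0)]),
     ([0,3,5], [(0,0)]),
     ([0,3,5,6], [(0,0)]),
     ([0,3,6], [(0,0)]),
     ([0,5], [(0,0)]),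
     ([0,5,6], [(0,0)]),
     ([0,6], [(0,0)]),
     ([1], [(0,0),(0,2),(2,1),(3,1)]),
     ([1,2], [(0,0),(0,2)]),
     ([1,2,4], [(0,0),(0,2)]),
     ([1,2,4,7], [(0,0),(0,2)]),
     ([1,2,7], [(0,0),(0,2)]),
     ([1,4], [(0,0),(0,2)]),
     ([1,4,7], [(0,0),(0,2)]),
     ([1,7], [(0,0),(0,2),(3,3)]),
     ([2,4], [(0,0),(0,2)]),
     ([2,4,7], [(0,0),(0,2)]),
     ([3,5], [(0,0),(0,2),(3,3)]),
     ([3,5], [(0,0),(3,3)]),
     ([3,5,6], [(0,0),(0,2)])]"

definition cert_01 :: "(nat list \<times> (nat \<times> nat) list) list" where
  "cert_01 =
    [([], [(0,0),(0,2),(1,3)]),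
     ([], [(0,0),(0,2),(1,3),(7,0)]),
     ([], [(0,0),(0,2),(4,3)]),
     ([], [(0,0),(0,2),(4,3),(7,0)]),
     ([], [(0,0),(1,3)]),
     ([], [(0,0),(1,3),(7,0)]),
     ([], [(0,0),(4,3)]),
     ([], [(0,0),(4,3),(7,0)]),
     ([0,3], [(0,0)]),
     ([0,3,5], [(0,0)]),
     ([0,3,5,6], [(0,0)]),
     ([0,3,6], [(0,0)]),
     ([0,5,6], [(0,0)]),
     ([0,6], [(0,0)]),
     ([1,2], [(0,0),(0,2)]),
     ([1,2,4], [(0,0),(0,2)]),
     ([1,2,4,7], [(0,0),(0,2)]),
     ([1,2,7], [(0,0),(0,2)]),
     ([1,4,7], [(0,0),(0,2)]),
     ([1,7], [(0,0),(0,2),(6,3)]),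
     ([2], [(0,0),(0,2),(1,1),(2,1)]),
     ([2], [(0,0),(0,2),(1,1),(2,1),(7,0)]),
     ([2,3], [(0,0),(1,0),(2,0),(3,0),(4,0),(5,0),(6,0),(7,0)]),
     ([2,4], [(0,0),(0,2)]),
     ([2,4,7], [(0,0),(0,2)]),
     ([2,7], [(0,0),(0,2),(2,3)]),
     ([2,7], [(0,0),(0,2),(2,3),(7,0)]),
     ([2,7], [(0,0),(0,2),(5,3)]),
     ([2,7], [(0,0),(0,2),(5,3),(7,0)]),
     ([2,7], [(0,0),(0,2),(7,0)]),
     ([3], [(0,0),(3,1),(4,1),(5,1),(6,1)]),
     ([3], [(0,0),(3,1),(4,1),(5,1),(6,1),(7,0)]),
     ([3,5], [(0,0),(0,2),(6,3)]),
     ([3,5], [(0,0),(6,3)]),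
     ([3,5,6], [(0,0),(0,2)]),
     ([3,6], [(0,0),(0,2),(2,3)]),
     ([3,6], [(0,0),(0,2),(2,3),(7,0)]),
     ([3,6], [(0,0),(0,2),(5,3)]),
     ([3,6], [(0,0),(0,2),(5,3),(7,0)]),
     ([3,6], [(0,0),(0,2),(7,0)]),
     ([3,6], [(0,0),(2,3)]),
     ([3,6], [(0,0),(2,3),(7,0)]),
     ([3,6], [(0,0),(5,3)]),
     ([3,6], [(0,0),(5,3),(7,0)]),
     ([3,6], [(0,0),(7,0)])]"

definition cert_10 :: "(nat list \<times> (nat \<times> nat) list) list" where
  "cert_10 =
    [([], [(0,0),(0,2),(1,3)]),
     ([], [(0,0),(0,2),(1,3),(7,0)]),
     ([], [(0,0),(0,2),(4,3)]),
     ([], [(0,0),(0,2),(4,3),(7,0)]),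
     ([], [(0,0),(1,3)]),
     ([], [(0,0),(1,3),(7,0)]),
     ([], [(0,0),(4,3)]),
     ([], [(0,0),(4,3),(7,0)]),
     ([0,3,5], [(0,0)]),
     ([0,3,5,6], [(0,0)]),
     ([0,3,6], [(0,0)]),
     ([0,5], [(0,0)]),
     ([0,5,6], [(0,0)]),
     ([0,6], [(0,0)]),
     ([1,2,4], [(0,0),(0,2)]),
     ([1,2,4,7], [(0,0),(0,2)]),
     ([1,2,7], [(0,0),(0,2)]),
     ([1,4], [(0,0),(0,2)]),
     ([1,4,7], [(0,0),(0,2)]),
     ([1,7], [(0,0),(0,2),(6,3)]),
     ([2,4], [(0,0),(0,2)]),
     ([2,4,7], [(0,0),(0,2)]),
     ([3,5], [(0,0),(0,2),(6,3)]),
     ([3,5], [(0,0),(6,3)]),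
     ([3,5,6], [(0,0),(0,2)]),
     ([4], [(0,0),(0,2),(1,1),(2,1)]),
     ([4], [(0,0),(0,2),(1,1),(2,1),(7,0)]),
     ([4,5], [(0,0),(1,0),(2,0),(3,0),(4,0),(5,0),(6,0),(7,0)]),
     ([4,7], [(0,0),(0,2),(2,3)]),
     ([4,7], [(0,0),(0,2),(2,3),(7,0)]),
     ([4,7], [(0,0),(0,2),(5,3)]),
     ([4,7], [(0,0),(0,2),(5,3),(7,0)]),
     ([4,7], [(0,0),(0,2),(7,0)]),
     ([5], [(0,0),(3,1),(4,1),(5,1),(6,1)]),
     ([5], [(0,0),(3,1),(4,1),(5,1),(6,1),(7,0)]),
     ([5,6], [(0,0),(0,2),(2,3)]),
     ([5,6], [(0,0),(0,2),(2,3),(7,0)]),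
     ([5,6], [(0,0),(0,2),(5,3)]),
     ([5,6], [(0,0),(0,2),(5,3),(7,0)]),
     ([5,6], [(0,0),(0,2),(7,0)]),
     ([5,6], [(0,0),(2,3)]),
     ([5,6], [(0,0),(2,3),(7,0)]),
     ([5,6], [(0,0),(5,3)]),
     ([5,6], [(0,0),(5,3),(7,0)]),
     ([5,6], [(0,0),(7,0)])]"

definition cert_11 :: "(nat list \<times> (nat \<times> nat) list) list" where
  "cert_11 =
    [([], [(0,0),(0,2),(2,3)]),
     ([], [(0,0),(0,2),(2,3),(9,0)]),
     ([], [(0,0),(0,2),(2,3),(9,0),(10,0)]),
     ([], [(0,0),(0,2),(2,3),(10,0)]),
     ([], [(0,0),(0,2),(5,3)]),
     ([], [(0,0),(0,2),(5,3),(9,0)]),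
     ([], [(0,0),(0,2),(5,3),(9,0),(10,0)]),
     ([], [(0,0),(0,2),(5,3),(10,0)]),
     ([], [(0,0),(2,3)]),
     ([], [(0,0),(2,3),(9,0)]),
     ([], [(0,0),(2,3),(10,0)]),
     ([], [(0,0),(5,3)]),
     ([], [(0,0),(5,3),(9,0)]),
     ([], [(0,0),(5,3),(10,0)]),
     ([0,3,5], [(0,0)]),
     ([0,3,5,6], [(0,0)]),
     ([0,3,6], [(0,0)]),
     ([0,5,6], [(0,0)]),
     ([0,6], [(0,0)]),
     ([1,2,4], [(0,0),(0,2)]),
     ([1,2,4,7], [(0,0),(0,2)]),
     ([1,2,7], [(0,0),(0,2)]),
     ([1,4,7], [(0,0),(0,2)]),
     ([1,7], [(0,0),(0,2),(8,3)]),
     ([2,4], [(0,0),(0,2)]),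
     ([2,4,7], [(0,0),(0,2)]),
     ([2,7], [(0,0),(0,2),(4,3)]),
     ([2,7], [(0,0),(0,2),(4,3),(10,0)]),
     ([2,7], [(0,0),(0,2),(7,3)]),
     ([2,7], [(0,0),(0,2),(7,3),(10,0)]),
     ([2,7], [(0,0),(0,2),(10,0)]),
     ([3,5], [(0,0),(0,2),(8,3)]),
     ([3,5], [(0,0),(8,3)]),
     ([3,5,6], [(0,0),(0,2)]),
     ([3,6], [(0,0),(0,2),(4,3)]),
     ([3,6], [(0,0),(0,2),(4,3),(10,0)]),
     ([3,6], [(0,0),(0,2),(7,3)]),
     ([3,6], [(0,0),(0,2),(7,3),(10,0)]),
     ([3,6], [(0,0),(0,2),(10,0)]),
     ([3,6], [(0,0),(4,3)]),
     ([3,6], [(0,0),(4,3),(10,0)]),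
     ([3,6], [(0,0),(7,3)]),
     ([3,6], [(0,0),(7,3),(10,0)]),
     ([3,6], [(0,0),(10,0)]),
     ([4,7], [(0,0),(0,2),(3,3)]),
     ([4,7], [(0,0),(0,2),(3,3),(9,0)]),
     ([4,7], [(0,0),(0,2),(6,3)]),
     ([4,7], [(0,0),(0,2),(6,3),(9,0)]),
     ([4,7], [(0,0),(0,2),(9,0)]),
     ([5,6], [(0,0),(0,2),(3,3)]),
     ([5,6], [(0,0),(0,2),(3,3),(9,0)]),
     ([5,6], [(0,0),(0,2),(6,3)]),
     ([5,6], [(0,0),(0,2),(6,3),(9,0)]),
     ([5,6], [(0,0),(0,2),(9,0)]),
     ([5,6], [(0,0),(3,3)]),
     ([5,6], [(0,0),(3,3),(9,0)]),
     ([5,6], [(0,0),(6,3)]),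
     ([5,6], [(0,0),(6,3),(9,0)]),
     ([5,6], [(0,0),(9,0)]),
     ([6], [(0,0),(1,1),(2,1),(3,1),(4,1)]),
     ([6], [(0,0),(1,1),(2,1),(3,1),(4,1),(9,0)]),
     ([6], [(0,0),(1,1),(2,1),(3,1),(4,1),(9,0),(10,0)]),
     ([6], [(0,0),(1,1),(2,1),(3,1),(4,1),(10,0)]),
     ([6,7], [(0,0),(1,0),(2,0),(3,0),(4,0),(5,0),(6,0),(7,0),(8,0),(9,0),(10,0)]),
     ([7], [(0,0),(0,2),(5,1),(6,1),(7,1),(8,1)]),
     ([7], [(0,0),(0,2),(5,1),(6,1),(7,1),(8,1),(9,0)]),
     ([7], [(0,0),(0,2),(5,1),(6,1),(7,1),(8,1),(9,0),(10,0)]),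
     ([7], [(0,0),(0,2),(5,1),(6,1),(7,1),(8,1),(10,0)])]"

lemma padp_certificate_00: "padp_certificate (Lvec False False) (Q False False) cert_00"
  by code_simp

lemma padp_certificate_01: "padp_certificate (Lvec False True) (Q False True) cert_01"
  by code_simp

lemma padp_certificate_10: "padp_certificate (Lvec True False) (Q True False) cert_10"
  by code_simp

lemma padp_certificate_11: "padp_certificate (Lvec True True) (Q True True) cert_11"
  by code_simp

theorem theorem8:
  fixes \<alpha> \<beta> \<gamma> :: "bool list" and a b :: bool
  assumes "length \<alpha> = n" and "length \<beta> = n" and "length \<gamma> = n"
  shows "padp a b \<alpha> \<beta> \<gamma> = 0 \<longleftrightarrow>
         (\<exists>p \<in> set (Q a b). pmatch p (omega \<alpha> \<beta> \<gamma>))"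
proof -
  have "\<exists>R. padp_certificate (Lvec a b) (Q a b) R"
    using padp_certificate_00 padp_certificate_01 padp_certificate_10 padp_certificate_11
    by (induction a; induction b) blast+
  then show ?thesis using padp_eq_0_iff_pmatch by blast
qed

end
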